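(* Fix $m\ge1$ and write $x=t_m$. Let $H^{(1)}(x),\dots,H^{(m)}(x)$ be arbitrary Laurent series of the form $H^{(a)}=z^a+\sum_{l\ge1}H^a_l(x)z^{-l}$ with coefficients smooth functions of $x$, and set $H^{(0)}=1$. Define $H^{(j)}$ for $j>m$ recursively by $$H^{(j+m)}=\Big(\frac{\partial}{\partial x}+H^{(m)}\Big)H^{(j)}-\sum_{l=1}^{j}H^m_lH^{(j-l)}-\sum_{l=1}^{m}H^j_lH^{(m-l)},\qquad j\ge0 .$$ Then each $H^{(j)}$ is of the form $z^j+\sum_{l\ge1}H^j_l(x)z^{-l}$, where the $H^j_l$ are differential polynomials in the coefficients of $H^{(1)},\dots,H^{(m)}$, and $x\mapsto(H^{(k)}(x))_{k\ge0}$ is an integral curve of $X_m$ in $\mathcal H$. Conversely, every integral curve of $X_m$ (parametrized by $x=t_m$) is obtained in this way from its first $m$ currents. Hence the space $\mathcal Q_m$ of orbits of $X_m$ is identified with the space of $m$-tuples $(H^{(1)}(x),\dots,H^{(m)}(x))$ of such Laurent series with arbitrary $x$-dependent coefficients.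
   Context: Let $z$ be a formal variable and $\mathcal L$ the space of formal Laurent series $\sum_{j\le N} l_j z^j$ (finitely many positive powers of $z$). Let $\mathcal H$ be the set of sequences $H=(H^{(k)})_{k\ge0}$ of elements of $\mathcal L$ with $H^{(0)}=1$ and, for $k\ge1$, $H^{(k)}=z^k+\sum_{l\ge1}H^k_l z^{-l}$; the coefficients $H^k_l$ are coordinates on $\mathcal H$, and we set $H^0_l=0$. The central system (CS) is the family of vector fields $X_j$, $j\ge1$, on $\mathcal H$, with associated times $t_j$, defined by $$\frac{\partial H^{(k)}}{\partial t_j}=H^{(j+k)}-H^{(j)}H^{(k)}+\sum_{l=1}^{k}H^j_lH^{(k-l)}+\sum_{l=1}^{j}H^k_lH^{(j-l)},\qquad k\ge0;$$ the right-hand side contains only negative powers of $z$, so this determines the components $X_j(H^k_l)$. *)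

theory Defs
  imports "HOL-Analysis.Analysis" "HOL-Computational_Algebra.Formal_Laurent_Series"
begin

text \<open>A formal Laurent series in z with finitely many positive powers of z
  is represented by a formal Laurent series (type real fls) in the variable w = z^{-1},
  which has finitely many negative powers of w. Thus z = fls_X_inv, and the coefficient
  of z^i is fls_nth F (-i).\<close>

abbreviation zvar :: "real fls" where "zvar \<equiv> fls_X_inv"

definition hc :: "real fls \<Rightarrow> nat \<Rightarrow> real" where
  "hc F l = fls_nth F (int l)"

text \<open>The space H: H^(0) = 1 and H^(k) = z^k + sum_{l>=1} H^k_l z^{-l} for k >= 1.\<close>
definition Hspace :: "(nat \<Rightarrow> real fls) set" where
  "Hspace = {H. H 0 = 1 \<and>
     (\<forall>k\<ge>1. \<forall>i::int. i \<le> 0 \<longrightarrow> fls_nth (H k) i = (if i = - int k then 1 else 0))}"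

text \<open>Right-hand side of the central system for d/dt_j of H^(k).\<close>
definition cs_rhs :: "(nat \<Rightarrow> real fls) \<Rightarrow> nat \<Rightarrow> nat \<Rightarrow> real fls" where
  "cs_rhs H j k = H (j + k) - H j * H k
      + (\<Sum>l=1..k. fls_const (hc (H j) l) * H (k - l))
      + (\<Sum>l=1..j. fls_const (hc (H k) l) * H (j - l))"

definition Xcomp :: "nat \<Rightarrow> (nat \<Rightarrow> real fls) \<Rightarrow> nat \<Rightarrow> nat \<Rightarrow> real" where
  "Xcomp j H k l = hc (cs_rhs H j k) l"

definition integral_curve :: "nat \<Rightarrow> (real \<Rightarrow> nat \<Rightarrow> real fls) \<Rightarrow> bool" where
  "integral_curve m \<gamma> \<longleftrightarrow> (\<forall>x. \<gamma> x \<in> Hspace) \<and>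
     (\<forall>x k l. 1 \<le> l \<longrightarrow>
        ((\<lambda>y. hc (\<gamma> y k) l) has_real_derivative Xcomp m (\<gamma> x) k l) (at x))"

definition smooth_fun :: "(real \<Rightarrow> real) \<Rightarrow> bool" where
  "smooth_fun f \<longleftrightarrow> (\<forall>n x. ((deriv ^^ n) f) differentiable (at x))"

text \<open>Coefficientwise x-derivative of an x-dependent series (set to 0 in the degenerate
  case where the coefficientwise derivative would not have finitely many positive powers of z).\<close>
definition fls_dx :: "(real \<Rightarrow> real fls) \<Rightarrow> real \<Rightarrow> real fls" where
  "fls_dx F x = (if (\<forall>\<^sub>\<infinity> n::nat. deriv (\<lambda>y. fls_nth (F y) (- int n)) x = 0)
     then Abs_fls (\<lambda>i. deriv (\<lambda>y. fls_nth (F y) i) x) else 0)"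

definition cur :: "nat \<Rightarrow> (nat \<Rightarrow> real) \<Rightarrow> real fls" where
  "cur k c = zvar ^ k + Abs_fls (\<lambda>i. if 1 \<le> i then c (nat i) else 0)"

text \<open>The currents generated by the data h a l x = H^a_l(x) (1 <= a <= m, l >= 1) via
  H^(j+m) = (d/dx + H^(m)) H^(j) - sum_{l=1}^j H^m_l H^(j-l) - sum_{l=1}^m H^j_l H^(m-l).
  (The case m = 0 is excluded in the theorem; a dummy value is used.)\<close>
function gen :: "nat \<Rightarrow> (nat \<Rightarrow> nat \<Rightarrow> real \<Rightarrow> real) \<Rightarrow> nat \<Rightarrow> real \<Rightarrow> real fls" where
  "gen m h n = (if n = 0 then (\<lambda>x. 1)
     else if n \<le> m \<or> m = 0 then (\<lambda>x. cur n (\<lambda>l. h n l x))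
     else (\<lambda>x. fls_dx (gen m h (n - m)) x + gen m h m x * gen m h (n - m) x
             - (\<Sum>l=1..n - m. fls_const (hc (gen m h m x) l) * gen m h (n - m - l) x)
             - (\<Sum>l=1..m. fls_const (hc (gen m h (n - m) x) l) * gen m h (m - l) x)))"
  by auto
termination
  by (relation "Wellfounded.measure (\<lambda>(m, h, n). n)") auto

text \<open>Differential polynomials in the variables H^a_l (a, l) and their x-derivatives.
  DVar a l r stands for the r-th x-derivative of H^a_l.\<close>
datatype dpoly = DConst real | DVar nat nat nat | DAdd dpoly dpoly | DMul dpoly dpoly

fun dp_eval :: "dpoly \<Rightarrow> (nat \<Rightarrow> nat \<Rightarrow> real \<Rightarrow> real) \<Rightarrow> real \<Rightarrow> real" where
  "dp_eval (DConst c) h x = c"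
| "dp_eval (DVar a l r) h x = (deriv ^^ r) (h a l) x"
| "dp_eval (DAdd p q) h x = dp_eval p h x + dp_eval q h x"
| "dp_eval (DMul p q) h x = dp_eval p h x * dp_eval q h x"

fun dp_vars :: "dpoly \<Rightarrow> (nat \<times> nat) set" where
  "dp_vars (DConst c) = {}"
| "dp_vars (DVar a l r) = {(a, l)}"
| "dp_vars (DAdd p q) = dp_vars p \<union> dp_vars q"
| "dp_vars (DMul p q) = dp_vars p \<union> dp_vars q"

text \<open>Admissible data: smooth coefficients for 1 <= a <= m, l >= 1, zero otherwise
  (normalization so that data and m-tuples correspond one-to-one).\<close>
definition data_space :: "nat \<Rightarrow> (nat \<Rightarrow> nat \<Rightarrow> real \<Rightarrow> real) set" where
  "data_space m = {h. (\<forall>a l. 1 \<le> a \<and> a \<le> m \<and> 1 \<le> l \<longrightarrow> smooth_fun (h a l)) \<and>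
                      (\<forall>a l. \<not> (1 \<le> a \<and> a \<le> m \<and> 1 \<le> l) \<longrightarrow> h a l = (\<lambda>_. 0))}"

definition first_currents :: "nat \<Rightarrow> (real \<Rightarrow> nat \<Rightarrow> real fls) \<Rightarrow> nat \<Rightarrow> nat \<Rightarrow> real \<Rightarrow> real" where
  "first_currents m \<gamma> a l x = (if 1 \<le> a \<and> a \<le> m \<and> 1 \<le> l then hc (\<gamma> x a) l else 0)"

end

theory Submission
  imports Defs
begin

text \<open>Along X_m the central system reads d/dx H^(j) = H^(m+j) - Q(m,j), where
  Q(a,b) = H^(a) H^(b) - sum_{l=1}^b H^a_l H^(b-l) - sum_{l=1}^a H^b_l H^(a-l).
  For currents H^(a), H^(b) the two correction sums cancel exactly the cross terms of
  nonnegative degree in H^(a) H^(b), so Q(a,b) = z^(a+b) + (negative powers of z). Hence the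
  recursion H^(m+j) = d/dx H^(j) + Q(m,j) produces currents, and it is nothing but the flow
  equation solved for H^(m+j); by strong induction on the index, an integral curve is
  determined by its first m currents. The same induction shows that the coefficients of the
  generated currents are differential polynomials in the data, hence differentiable, so the
  generated sequence is an integral curve. Conversely, along an integral curve the
  polynomials in the coefficients form an algebra that d/dx = X_m maps into itself, so all
  coefficients, in particular those of the first m currents, are smooth.\<close>

lemma fls_nth_mult_bounded:
  fixes f g :: "'a::semiring_0 fls"
  assumes f: "\<And>t. t < a \<Longrightarrow> fls_nth f t = 0" and g: "\<And>t. t < b \<Longrightarrow> fls_nth g t = 0"
  shows "fls_nth (f * g) n = (\<Sum>t=a..n-b. fls_nth f t * fls_nth g (n - t))"
proof (cases "f = 0 \<or> g = 0")
  case True then show ?thesis by auto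
next
  case False
  then have "a \<le> fls_subdegree f" "b \<le> fls_subdegree g"
    using f g fls_subdegree_geI by auto
  then have "(\<Sum>t=a..n-b. fls_nth f t * fls_nth g (n - t)) =
      (\<Sum>t=fls_subdegree f..n - fls_subdegree g. fls_nth f t * fls_nth g (n - t))"
    by (intro sum.mono_neutral_right) auto
  then show ?thesis by (simp add: fls_times_nth(2))
qed

definition is_current :: "nat \<Rightarrow> real fls \<Rightarrow> bool" where
  "is_current k F \<longleftrightarrow>
     (\<forall>i::int. i \<le> 0 \<longrightarrow> fls_nth F i = (if i = - int k then 1 else 0)) \<and> (k = 0 \<longrightarrow> F = 1)"

lemma Hspace_iff_is_current: "H \<in> Hspace \<longleftrightarrow> (\<forall>k. is_current k (H k))"
proof
  assume H: "H \<in> Hspace"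
  show "\<forall>k. is_current k (H k)"
  proof
    fix k show "is_current k (H k)"
      using H by (cases "k = 0") (auto simp: Hspace_def is_current_def)
  qed
qed (auto simp: Hspace_def is_current_def)

lemma is_current_nonpos_nth: "is_current k F \<Longrightarrow> i \<le> 0 \<Longrightarrow> fls_nth F i = (if i = - int k then 1 else 0)"
  by (simp add: is_current_def)

lemma is_current_nth_below: "is_current k F \<Longrightarrow> i < - int k \<Longrightarrow> fls_nth F i = 0"
  by (simp add: is_current_def)

definition neg_part :: "(nat \<Rightarrow> real) \<Rightarrow> real fls" where
  "neg_part c = Abs_fls (\<lambda>i. if 1 \<le> i then c (nat i) else 0)"

lemma neg_part_nth: "fls_nth (neg_part c) i = (if 1 \<le> i then c (nat i) else 0)"
  unfolding neg_part_def by (rule nth_Abs_fls_ex_lower_bound) (rule exI[of _ 1], auto)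

lemma neg_part_mult_nth: "i \<le> 1 \<Longrightarrow> fls_nth (neg_part a * neg_part b) i = 0"
  by (subst fls_nth_mult_bounded[where a = 1 and b = 1]) (auto simp: neg_part_nth)

lemma cur_eq_neg_part: "cur k c = zvar ^ k + neg_part c"
  unfolding cur_def neg_part_def by simp

lemma cur_nth:
  "fls_nth (cur k c) i = (if i = - int k then 1 else 0) + (if 1 \<le> i then c (nat i) else 0)"
  by (simp add: cur_eq_neg_part neg_part_nth)

lemma hc_cur: "1 \<le> l \<Longrightarrow> hc (cur k c) l = c l"
  by (simp add: hc_def cur_nth)

lemma is_current_cur: "1 \<le> k \<Longrightarrow> is_current k (cur k c)"
  by (simp add: is_current_def cur_nth)

lemma is_current_eq_cur: "1 \<le> k \<Longrightarrow> is_current k F \<Longrightarrow> F = cur k (hc F)"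
  by (rule fls_eqI) (auto simp: is_current_def cur_nth hc_def not_le)

lemma cur_cong: "(\<And>l. 1 \<le> l \<Longrightarrow> c l = d l) \<Longrightarrow> cur k c = cur k d"
  by (rule fls_eqI) (simp add: cur_nth)

lemma cur_mult_nonpos_nth:
  assumes "i \<le> 0"
  shows "fls_nth (cur a ca * cur b cb) i = (if i = - int (a + b) then 1 else 0)
     + (if 1 \<le> i + int a then cb (nat (i + int a)) else 0)
     + (if 1 \<le> i + int b then ca (nat (i + int b)) else 0)"
proof -
  have "cur a ca * cur b cb =
      zvar ^ (a + b) + zvar ^ a * neg_part cb + zvar ^ b * neg_part ca + neg_part ca * neg_part cb"
    by (simp add: cur_eq_neg_part algebra_simps power_add)
  then show ?thesis
    using assms by (simp add: fls_X_inv_power_times_conv_shift neg_part_nth neg_part_mult_nth)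
qed

lemma sum_const_times_current_nonpos_nth:
  assumes "\<forall>n < b. is_current n (F n)" "i \<le> 0"
  shows "fls_nth (\<Sum>l=1..b. fls_const (c l) * F (b - l)) i =
    (if 1 \<le> int b + i then c (nat (int b + i)) else 0)"
proof -
  have "fls_nth (\<Sum>l=1..b. fls_const (c l) * F (b - l)) i = (\<Sum>l=1..b. c l * fls_nth (F (b - l)) i)"
    by (simp add: fls_nth_sum)
  also have "\<dots> = (\<Sum>l\<in>{1..b}. if l = nat (int b + i) then c l else 0)"
  proof (rule sum.cong)
    fix l assume l: "l \<in> {1..b}"
    then have "is_current (b - l) (F (b - l))" using assms by auto
    then have "fls_nth (F (b - l)) i = (if i = - int (b - l) then 1 else 0)"
      using assms(2) is_current_nonpos_nth by blast
    then show "c l * fls_nth (F (b - l)) i = (if l = nat (int b + i) then c l else 0)"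
      using l by auto
  qed simp
  also have "\<dots> = (if 1 \<le> int b + i then c (nat (int b + i)) else 0)"
    using assms(2) by (auto simp add: sum.delta)
  finally show ?thesis .
qed

definition cs_quadratic :: "(nat \<Rightarrow> real fls) \<Rightarrow> nat \<Rightarrow> nat \<Rightarrow> real fls" where
  "cs_quadratic H a b = H a * H b
      - (\<Sum>l=1..b. fls_const (hc (H a) l) * H (b - l))
      - (\<Sum>l=1..a. fls_const (hc (H b) l) * H (a - l))"

lemma cs_rhs_eq_quadratic: "cs_rhs H j k = H (j + k) - cs_quadratic H j k"
  by (simp add: cs_rhs_def cs_quadratic_def algebra_simps)

lemma cs_quadratic_zero_right: "H 0 = 1 \<Longrightarrow> cs_quadratic H a 0 = H a"
  by (simp add: cs_quadratic_def hc_def)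

lemma cs_quadratic_cong:
  assumes "\<And>n. n \<le> max a b \<Longrightarrow> H n = H' n"
  shows "cs_quadratic H a b = cs_quadratic H' a b"
  using assms unfolding cs_quadratic_def by (simp cong: sum.cong)

lemma cs_quadratic_nonpos_nth:
  assumes H: "\<forall>n \<le> max a b. is_current n (H n)" and i: "i \<le> 0"
  shows "fls_nth (cs_quadratic H a b) i = (if i = - int (a + b) then 1 else 0)"
proof -
  have s1: "fls_nth (\<Sum>l=1..b. fls_const (hc (H a) l) * H (b - l)) i =
      (if 1 \<le> int b + i then hc (H a) (nat (int b + i)) else 0)"
    by (rule sum_const_times_current_nonpos_nth) (use H i in auto)
  have s2: "fls_nth (\<Sum>l=1..a. fls_const (hc (H b) l) * H (a - l)) i =
      (if 1 \<le> int a + i then hc (H b) (nat (int a + i)) else 0)"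
    by (rule sum_const_times_current_nonpos_nth) (use H i in auto)
  have Ha: "is_current a (H a)" and Hb: "is_current b (H b)" using H by auto
  consider "a = 0" | "b = 0" | "1 \<le> a" "1 \<le> b" by linarith
  then show ?thesis
  proof cases
    case 1
    then have "H a = 1" using Ha by (simp add: is_current_def)
    then show ?thesis
      using 1 s1 s2 i is_current_nonpos_nth[OF Hb i] by (auto simp: cs_quadratic_def hc_def)
  next
    case 2
    then have "H b = 1" using Hb by (simp add: is_current_def)
    then show ?thesis
      using 2 s1 s2 i is_current_nonpos_nth[OF Ha i] by (auto simp: cs_quadratic_def hc_def)
  next
    case 3
    then have "H a = cur a (hc (H a))" "H b = cur b (hc (H b))"
      using is_current_eq_cur Ha Hb by auto
    then have "fls_nth (H a * H b) i = (if i = - int (a + b) then 1 else 0)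
        + (if 1 \<le> i + int a then hc (H b) (nat (i + int a)) else 0)
        + (if 1 \<le> i + int b then hc (H a) (nat (i + int b)) else 0)"
      using cur_mult_nonpos_nth[OF i] by metis
    then show ?thesis using s1 s2 by (simp add: cs_quadratic_def algebra_simps)
  qed
qed

lemma cs_quadratic_nth:
  assumes "is_current a (H a)" "is_current b (H b)"
  shows "fls_nth (cs_quadratic H a b) i =
      (\<Sum>t=-int a..i+int b. fls_nth (H a) t * fls_nth (H b) (i - t))
    - (\<Sum>l=1..b. fls_nth (H a) (int l) * fls_nth (H (b - l)) i)
    - (\<Sum>l=1..a. fls_nth (H b) (int l) * fls_nth (H (a - l)) i)"
proof -
  have "fls_nth (H a * H b) i = (\<Sum>t=-int a..i+int b. fls_nth (H a) t * fls_nth (H b) (i - t))"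
    using fls_nth_mult_bounded[of "-int a" "H a" "-int b" "H b" i] assms is_current_nth_below
    by simp
  then show ?thesis by (simp add: cs_quadratic_def fls_nth_sum hc_def)
qed

lemma fls_dx_nth:
  assumes "\<And>y. is_current j (F y)"
  shows "fls_nth (fls_dx F x) i = deriv (\<lambda>y. fls_nth (F y) i) x"
proof -
  have "deriv (\<lambda>y. fls_nth (F y) i) x = 0" if "i \<le> 0" for i
    using assms that by (simp add: is_current_def)
  then show ?thesis by (simp add: fls_dx_def)
qed

lemma fls_dx_nonpos_nth:
  assumes "\<And>y. is_current j (F y)" "i \<le> 0"
  shows "fls_nth (fls_dx F x) i = 0"
proof -
  have "(\<lambda>y. fls_nth (F y) i) = (\<lambda>_. if i = - int j then 1 else 0)"
    using assms by (auto simp: is_current_def)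
  then show ?thesis by (simp add: fls_dx_nth[OF assms(1)])
qed

lemma fls_dx_const: "fls_dx (\<lambda>_. F) x = 0"
  by (simp add: fls_dx_def zero_fls_def)

declare gen.simps[simp del]

lemma gen_0: "gen m h 0 x = 1"
  by (subst gen.simps) simp

lemma gen_cur: "1 \<le> n \<Longrightarrow> n \<le> m \<Longrightarrow> gen m h n x = cur n (\<lambda>l. h n l x)"
  by (subst gen.simps) simp

lemma current_index_cases:
  fixes n m :: nat
  obtains "n = 0" | "1 \<le> n" "n \<le> m" | j where "1 \<le> j" "n = m + j"
proof (cases "n \<le> m")
  case True then show thesis using that(1,2) by (cases "n = 0") auto
next
  case False then show thesis using that(3)[of "n - m"] by simp
qed

lemma gen_step:
  assumes "1 \<le> m"
  shows "gen m h (m + j) x = fls_dx (gen m h j) x + cs_quadratic (\<lambda>k. gen m h k x) m j"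
proof (cases "j = 0")
  case True
  have "gen m h 0 = (\<lambda>_. 1)" by (simp add: gen_0 fun_eq_iff)
  then show ?thesis using True by (simp add: fls_dx_const cs_quadratic_zero_right gen_0)
next
  case False
  then show ?thesis
    using assms by (subst gen.simps) (simp add: cs_quadratic_def algebra_simps)
qed

lemma gen_is_current:
  assumes m: "1 \<le> m"
  shows "is_current n (gen m h n x)"
proof (induction n arbitrary: x rule: less_induct)
  case (less n)
  show ?case
  proof (cases rule: current_index_cases[where n = n and m = m])
    case 1 then show ?thesis by (simp add: gen_0 is_current_def)
  next
    case 2 then show ?thesis by (simp add: gen_cur is_current_cur)
  next
    case (3 j)
    have cur_j: "\<And>y. is_current j (gen m h j y)"
      and cur_low: "\<forall>k \<le> max m j. is_current k (gen m h k x)"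
      using less 3 m by auto
    show ?thesis unfolding is_current_def
    proof (intro conjI allI impI)
      fix i :: int assume i: "i \<le> 0"
      show "fls_nth (gen m h n x) i = (if i = - int n then 1 else 0)"
        using 3 m by (simp add: gen_step fls_dx_nonpos_nth[OF cur_j i] cs_quadratic_nonpos_nth[OF cur_low i])
    qed (use 3 in simp)
  qed
qed

lemma integral_curve_is_current: "integral_curve m \<gamma> \<Longrightarrow> is_current k (\<gamma> x k)"
  unfolding integral_curve_def Hspace_iff_is_current by blast

lemma cs_rhs_nonpos_nth:
  assumes "\<forall>n \<le> j + k. is_current n (H n)" "i \<le> 0"
  shows "fls_nth (cs_rhs H j k) i = 0"
  using assms is_current_nonpos_nth[of "j + k" "H (j + k)"]
  by (simp add: cs_rhs_eq_quadratic cs_quadratic_nonpos_nth)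

lemma integral_curve_has_derivative_nth:
  assumes ic: "integral_curve m \<gamma>"
  shows "((\<lambda>y. fls_nth (\<gamma> y k) i) has_real_derivative fls_nth (cs_rhs (\<gamma> x) m k) i) (at x)"
proof (cases "i \<le> 0")
  case True
  have "(\<lambda>y. fls_nth (\<gamma> y k) i) = (\<lambda>_. if i = - int k then 1 else 0)"
    using integral_curve_is_current[OF ic] True by (auto simp: is_current_def)
  moreover have "fls_nth (cs_rhs (\<gamma> x) m k) i = 0"
    using integral_curve_is_current[OF ic] True by (simp add: cs_rhs_nonpos_nth)
  ultimately show ?thesis by simp
next
  case False
  then have "i = int (nat i)" "1 \<le> nat i" by auto
  then show ?thesis using ic unfolding integral_curve_def Xcomp_def hc_def by metis
qed

lemma integral_curve_fls_dx:
  assumes ic: "integral_curve m \<gamma>"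
  shows "fls_dx (\<lambda>y. \<gamma> y k) x = cs_rhs (\<gamma> x) m k"
  by (intro fls_eqI)
    (simp add: fls_dx_nth[OF integral_curve_is_current[OF ic]]
      DERIV_imp_deriv[OF integral_curve_has_derivative_nth[OF ic]])

lemma integral_curve_step:
  "integral_curve m \<gamma> \<Longrightarrow> \<gamma> x (m + j) = fls_dx (\<lambda>y. \<gamma> y j) x + cs_quadratic (\<gamma> x) m j"
  by (simp add: integral_curve_fls_dx cs_rhs_eq_quadratic)

lemma integral_curve_eq_gen:
  assumes m: "1 \<le> m" and ic: "integral_curve m \<gamma>"
  shows "\<gamma> x k = gen m (first_currents m \<gamma>) k x"
proof (induction k arbitrary: x rule: less_induct)
  case (less k)
  define h where "h = first_currents m \<gamma>"
  have "gen m h k x = \<gamma> x k"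
  proof (cases rule: current_index_cases[where n = k and m = m])
    case 1 then show ?thesis
      using integral_curve_is_current[OF ic, of 0 x] by (simp add: gen_0 is_current_def)
  next
    case 2
    have "gen m h k x = cur k (hc (\<gamma> x k))"
      using 2 by (simp add: gen_cur h_def first_currents_def cong: cur_cong)
    also have "\<dots> = \<gamma> x k"
      using 2 is_current_eq_cur[OF _ integral_curve_is_current[OF ic]] by simp
    finally show ?thesis .
  next
    case (3 j)
    have IH: "\<And>n y. n < k \<Longrightarrow> gen m h n y = \<gamma> y n" using less h_def by auto
    have "gen m h j = (\<lambda>y. \<gamma> y j)" using IH 3 m by auto
    moreover have "cs_quadratic (\<lambda>n. gen m h n x) m j = cs_quadratic (\<gamma> x) m j"
      using IH 3 m by (intro cs_quadratic_cong) auto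
    ultimately show ?thesis using 3 m by (simp add: gen_step integral_curve_step[OF ic])
  qed
  then show ?case by (simp add: h_def)
qed

definition data_vars :: "nat \<Rightarrow> (nat \<times> nat) set" where
  "data_vars m = {(a, l). 1 \<le> a \<and> a \<le> m \<and> 1 \<le> l}"

definition is_diff_poly :: "nat \<Rightarrow> ((nat \<Rightarrow> nat \<Rightarrow> real \<Rightarrow> real) \<Rightarrow> real \<Rightarrow> real) \<Rightarrow> bool" where
  "is_diff_poly m F \<longleftrightarrow>
     (\<exists>p. dp_vars p \<subseteq> data_vars m \<and> (\<forall>h \<in> data_space m. \<forall>x. F h x = dp_eval p h x))"

lemma is_diff_poly_const: "is_diff_poly m (\<lambda>h x. c)"
  unfolding is_diff_poly_def by (rule exI[of _ "DConst c"]) simp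

lemma is_diff_poly_var: "1 \<le> a \<Longrightarrow> a \<le> m \<Longrightarrow> 1 \<le> l \<Longrightarrow> is_diff_poly m (\<lambda>h x. h a l x)"
  unfolding is_diff_poly_def by (rule exI[of _ "DVar a l 0"]) (simp add: data_vars_def)

lemma is_diff_poly_add:
  assumes "is_diff_poly m F" "is_diff_poly m G"
  shows "is_diff_poly m (\<lambda>h x. F h x + G h x)"
proof -
  obtain p q where "dp_vars p \<subseteq> data_vars m" "dp_vars q \<subseteq> data_vars m"
      "\<forall>h \<in> data_space m. \<forall>x. F h x = dp_eval p h x" "\<forall>h \<in> data_space m. \<forall>x. G h x = dp_eval q h x"
    using assms unfolding is_diff_poly_def by blast
  then show ?thesis unfolding is_diff_poly_def by (intro exI[of _ "DAdd p q"]) auto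
qed

lemma is_diff_poly_mult:
  assumes "is_diff_poly m F" "is_diff_poly m G"
  shows "is_diff_poly m (\<lambda>h x. F h x * G h x)"
proof -
  obtain p q where "dp_vars p \<subseteq> data_vars m" "dp_vars q \<subseteq> data_vars m"
      "\<forall>h \<in> data_space m. \<forall>x. F h x = dp_eval p h x" "\<forall>h \<in> data_space m. \<forall>x. G h x = dp_eval q h x"
    using assms unfolding is_diff_poly_def by blast
  then show ?thesis unfolding is_diff_poly_def by (intro exI[of _ "DMul p q"]) auto
qed

lemma is_diff_poly_diff:
  assumes "is_diff_poly m F" "is_diff_poly m G"
  shows "is_diff_poly m (\<lambda>h x. F h x - G h x)"
  using is_diff_poly_add[OF assms(1) is_diff_poly_mult[OF is_diff_poly_const[of m "-1"] assms(2)]]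
  by simp

lemma is_diff_poly_sum:
  "finite A \<Longrightarrow> (\<And>a. a \<in> A \<Longrightarrow> is_diff_poly m (F a)) \<Longrightarrow> is_diff_poly m (\<lambda>h x. \<Sum>a\<in>A. F a h x)"
proof (induction A rule: finite_induct)
  case empty then show ?case by (simp add: is_diff_poly_const)
next
  case (insert a A)
  then have "is_diff_poly m (\<lambda>h x. F a h x + (\<Sum>a\<in>A. F a h x))" by (intro is_diff_poly_add) auto
  then show ?case using insert by simp
qed

fun dp_deriv :: "dpoly \<Rightarrow> dpoly" where
  "dp_deriv (DConst c) = DConst 0"
| "dp_deriv (DVar a l r) = DVar a l (Suc r)"
| "dp_deriv (DAdd p q) = DAdd (dp_deriv p) (dp_deriv q)"
| "dp_deriv (DMul p q) = DAdd (DMul (dp_deriv p) q) (DMul p (dp_deriv q))"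

lemma dp_vars_dp_deriv: "dp_vars (dp_deriv p) = dp_vars p"
  by (induction p) auto

lemma smooth_fun_zero: "smooth_fun (\<lambda>_. 0)"
proof -
  have "(deriv ^^ n) (\<lambda>_. 0::real) = (\<lambda>_. 0)" for n
    by (induction n) auto
  then show ?thesis unfolding smooth_fun_def by simp
qed

lemma data_space_smooth: "h \<in> data_space m \<Longrightarrow> smooth_fun (h a l)"
  unfolding data_space_def using smooth_fun_zero by (cases "1 \<le> a \<and> a \<le> m \<and> 1 \<le> l") auto

lemma dp_eval_has_derivative:
  assumes h: "h \<in> data_space m"
  shows "((\<lambda>x. dp_eval p h x) has_real_derivative dp_eval (dp_deriv p) h x) (at x)"
proof (induction p arbitrary: x)
  case (DConst c) then show ?case by simp
next
  case (DVar a l r)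
  have "(deriv ^^ r) (h a l) differentiable (at x)"
    using data_space_smooth[OF h] unfolding smooth_fun_def by blast
  then show ?case by (simp add: DERIV_deriv_iff_real_differentiable)
next
  case (DAdd p q) then show ?case by (simp add: DERIV_add)
next
  case (DMul p q)
  from DERIV_mult[OF DMul.IH] show ?case by (simp add: algebra_simps)
qed

lemma is_diff_poly_deriv:
  assumes "is_diff_poly m F"
  shows "is_diff_poly m (\<lambda>h x. deriv (F h) x)"
    and "h \<in> data_space m \<Longrightarrow> (F h has_real_derivative deriv (F h) x) (at x)"
proof -
  obtain p where p: "dp_vars p \<subseteq> data_vars m" "\<forall>h \<in> data_space m. F h = (\<lambda>x. dp_eval p h x)"
    using assms unfolding is_diff_poly_def by fastforce
  have deriv_F: "deriv (F h) x = dp_eval (dp_deriv p) h x" if "h \<in> data_space m" for h x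
    using p(2) that DERIV_imp_deriv[OF dp_eval_has_derivative[OF that]] by simp
  show "is_diff_poly m (\<lambda>h x. deriv (F h) x)"
    unfolding is_diff_poly_def using p(1) deriv_F
    by (intro exI[of _ "dp_deriv p"]) (simp add: dp_vars_dp_deriv)
  show "(F h has_real_derivative deriv (F h) x) (at x)" if "h \<in> data_space m"
    using p(2) that deriv_F[OF that] dp_eval_has_derivative[OF that] by simp
qed

lemma is_diff_poly_gen_nth:
  assumes m: "1 \<le> m"
  shows "is_diff_poly m (\<lambda>h x. fls_nth (gen m h k x) i)"
proof (induction k arbitrary: i rule: less_induct)
  case (less k)
  show ?case
  proof (cases "i \<le> 0")
    case True
    then have "fls_nth (gen m h k x) i = (if i = - int k then 1 else 0)" for h x
      using gen_is_current[OF m] by (simp add: is_current_nonpos_nth)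
    then show ?thesis using is_diff_poly_const by simp
  next
    case i: False
    show ?thesis
    proof (cases rule: current_index_cases[where n = k and m = m])
      case 1
      then show ?thesis using i is_diff_poly_const[of m 0] by (simp add: gen_0)
    next
      case 2
      then show ?thesis using i is_diff_poly_var[of k m "nat i"] by (simp add: gen_cur cur_nth)
    next
      case (3 j)
      have "fls_nth (gen m h k x) i = deriv (\<lambda>y. fls_nth (gen m h j y) i) x
          + ((\<Sum>t=-int m..i+int j. fls_nth (gen m h m x) t * fls_nth (gen m h j x) (i - t))
          - (\<Sum>l=1..j. fls_nth (gen m h m x) (int l) * fls_nth (gen m h (j - l) x) i)
          - (\<Sum>l=1..m. fls_nth (gen m h j x) (int l) * fls_nth (gen m h (m - l) x) i))" for h x
        using 3 gen_is_current[OF m]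
        by (simp add: gen_step[OF m] fls_dx_nth[OF gen_is_current[OF m]] cs_quadratic_nth)
      moreover have "\<And>n i. n < k \<Longrightarrow> is_diff_poly m (\<lambda>h x. fls_nth (gen m h n x) i)"
        by (rule less)
      ultimately show ?thesis using 3 m
        by (simp, intro is_diff_poly_add is_diff_poly_diff is_diff_poly_sum is_diff_poly_mult
            is_diff_poly_deriv(1)) auto
    qed
  qed
qed

lemma integral_curve_gen:
  assumes m: "1 \<le> m" and h: "h \<in> data_space m"
  shows "integral_curve m (\<lambda>x k. gen m h k x)"
  unfolding integral_curve_def
proof (intro conjI allI impI)
  show "(\<lambda>k. gen m h k x) \<in> Hspace" for x
    using gen_is_current[OF m] by (simp add: Hspace_iff_is_current)
  fix x k l
  have "cs_rhs (\<lambda>k. gen m h k x) m k = fls_dx (gen m h k) x"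
    by (simp add: cs_rhs_eq_quadratic gen_step[OF m])
  then have "Xcomp m (\<lambda>k. gen m h k x) k l = deriv (\<lambda>y. hc (gen m h k y) l) x"
    by (simp add: Xcomp_def hc_def fls_dx_nth[OF gen_is_current[OF m]])
  then show "((\<lambda>y. hc (gen m h k y) l) has_real_derivative Xcomp m (\<lambda>k. gen m h k x) k l) (at x)"
    using is_diff_poly_deriv(2)[OF is_diff_poly_gen_nth[OF m] h] by (simp add: hc_def)
qed

inductive_set poly_closure :: "(real \<Rightarrow> real) set \<Rightarrow> (real \<Rightarrow> real) set" for V where
  const: "(\<lambda>_. c) \<in> poly_closure V"
| base: "f \<in> V \<Longrightarrow> f \<in> poly_closure V"
| add: "f \<in> poly_closure V \<Longrightarrow> g \<in> poly_closure V \<Longrightarrow> (\<lambda>x. f x + g x) \<in> poly_closure V"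
| mult: "f \<in> poly_closure V \<Longrightarrow> g \<in> poly_closure V \<Longrightarrow> (\<lambda>x. f x * g x) \<in> poly_closure V"

lemma poly_closure_diff:
  assumes "f \<in> poly_closure V" "g \<in> poly_closure V"
  shows "(\<lambda>x. f x - g x) \<in> poly_closure V"
  using poly_closure.add[OF assms(1) poly_closure.mult[OF poly_closure.const[of "-1"] assms(2)]]
  by simp

lemma poly_closure_sum:
  "finite A \<Longrightarrow> (\<And>a. a \<in> A \<Longrightarrow> f a \<in> poly_closure V) \<Longrightarrow> (\<lambda>x. \<Sum>a\<in>A. f a x) \<in> poly_closure V"
proof (induction A rule: finite_induct)
  case empty then show ?case using poly_closure.const[of 0] by simp
next
  case (insert a A)
  then have "(\<lambda>x. f a x + (\<Sum>a\<in>A. f a x)) \<in> poly_closure V" by (intro poly_closure.add) auto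
  then show ?case using insert by simp
qed

lemma poly_closure_has_derivative:
  assumes V: "\<And>v. v \<in> V \<Longrightarrow> \<exists>v' \<in> poly_closure V. \<forall>x. (v has_real_derivative v' x) (at x)"
    and f: "f \<in> poly_closure V"
  shows "\<exists>f' \<in> poly_closure V. \<forall>x. (f has_real_derivative f' x) (at x)"
  using f
proof induction
  case (const c)
  show ?case by (rule bexI[of _ "\<lambda>_. 0"]) (auto intro: poly_closure.const)
next
  case (base v)
  then show ?case by (rule V)
next
  case (add f g)
  then obtain f' g' where "f' \<in> poly_closure V" "g' \<in> poly_closure V"
    "\<forall>x. (f has_real_derivative f' x) (at x)" "\<forall>x. (g has_real_derivative g' x) (at x)"
    by blast
  then show ?case
    by (intro bexI[of _ "\<lambda>x. f' x + g' x"]) (auto intro: DERIV_add poly_closure.add)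
next
  case (mult f g)
  then obtain f' g' where "f' \<in> poly_closure V" "g' \<in> poly_closure V"
    "\<forall>x. (f has_real_derivative f' x) (at x)" "\<forall>x. (g has_real_derivative g' x) (at x)"
    by blast
  with mult.hyps show ?case
    by (intro bexI[of _ "\<lambda>x. f' x * g x + g' x * f x"])
      (auto intro: DERIV_mult poly_closure.add poly_closure.mult)
qed

lemma poly_closure_smooth:
  assumes V: "\<And>v. v \<in> V \<Longrightarrow> \<exists>v' \<in> poly_closure V. \<forall>x. (v has_real_derivative v' x) (at x)"
    and f: "f \<in> poly_closure V"
  shows "smooth_fun f"
proof -
  have deriv_closed: "(deriv ^^ n) f \<in> poly_closure V" for n
  proof (induction n)
    case 0 then show ?case using f by simp
  next
    case (Suc n)
    then obtain g where "g \<in> poly_closure V" "\<forall>x. ((deriv ^^ n) f has_real_derivative g x) (at x)"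
      using poly_closure_has_derivative[OF V] by blast
    then show ?case using DERIV_imp_deriv by (metis funpow.simps(2) o_apply ext)
  qed
  show ?thesis
    unfolding smooth_fun_def real_differentiable_def
    using poly_closure_has_derivative[OF V deriv_closed] by blast
qed

definition curve_coeffs :: "(real \<Rightarrow> nat \<Rightarrow> real fls) \<Rightarrow> (real \<Rightarrow> real) set" where
  "curve_coeffs \<gamma> = {(\<lambda>x. fls_nth (\<gamma> x k) i) | k i. True}"

lemma integral_curve_coeffs_derivative:
  assumes ic: "integral_curve m \<gamma>" and v: "v \<in> curve_coeffs \<gamma>"
  shows "\<exists>v' \<in> poly_closure (curve_coeffs \<gamma>). \<forall>x. (v has_real_derivative v' x) (at x)"
proof -
  obtain k i where v_eq: "v = (\<lambda>x. fls_nth (\<gamma> x k) i)"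
    using v by (auto simp: curve_coeffs_def)
  have coeff: "(\<lambda>x. fls_nth (\<gamma> x n) t) \<in> poly_closure (curve_coeffs \<gamma>)" for n t
    by (rule poly_closure.base) (auto simp: curve_coeffs_def)
  have "(\<lambda>x. fls_nth (cs_rhs (\<gamma> x) m k) i) = (\<lambda>x. fls_nth (\<gamma> x (m + k)) i
      - ((\<Sum>t=-int m..i+int k. fls_nth (\<gamma> x m) t * fls_nth (\<gamma> x k) (i - t))
      - (\<Sum>l=1..k. fls_nth (\<gamma> x m) (int l) * fls_nth (\<gamma> x (k - l)) i)
      - (\<Sum>l=1..m. fls_nth (\<gamma> x k) (int l) * fls_nth (\<gamma> x (m - l)) i)))"
    using integral_curve_is_current[OF ic] by (simp add: cs_rhs_eq_quadratic cs_quadratic_nth)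
  also have "\<dots> \<in> poly_closure (curve_coeffs \<gamma>)"
    by (intro poly_closure_diff poly_closure_sum poly_closure.mult coeff) auto
  finally show ?thesis
    unfolding v_eq using integral_curve_has_derivative_nth[OF ic] by (intro bexI) auto
qed

lemma first_currents_in_data_space:
  assumes ic: "integral_curve m \<gamma>"
  shows "first_currents m \<gamma> \<in> data_space m"
  unfolding data_space_def
proof (intro CollectI conjI allI impI)
  fix a l :: nat assume "1 \<le> a \<and> a \<le> m \<and> 1 \<le> l"
  then have "first_currents m \<gamma> a l = (\<lambda>x. fls_nth (\<gamma> x a) (int l))"
    by (auto simp: first_currents_def hc_def)
  moreover have "(\<lambda>x. fls_nth (\<gamma> x a) (int l)) \<in> poly_closure (curve_coeffs \<gamma>)"
    by (rule poly_closure.base) (auto simp: curve_coeffs_def)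
  ultimately show "smooth_fun (first_currents m \<gamma> a l)"
    using poly_closure_smooth integral_curve_coeffs_derivative[OF ic] by metis
next
  fix a l :: nat assume "\<not> (1 \<le> a \<and> a \<le> m \<and> 1 \<le> l)"
  then show "first_currents m \<gamma> a l = (\<lambda>_. 0)" by (auto simp: first_currents_def)
qed

lemma first_currents_gen:
  assumes h: "h \<in> data_space m"
  shows "first_currents m (\<lambda>x k. gen m h k x) = h"
proof (intro ext)
  fix a l x
  show "first_currents m (\<lambda>x k. gen m h k x) a l x = h a l x"
  proof (cases "1 \<le> a \<and> a \<le> m \<and> 1 \<le> l")
    case True then show ?thesis by (simp add: first_currents_def gen_cur hc_cur)
  next
    case False
    then have "h a l = (\<lambda>_. 0)" using h unfolding data_space_def by blast
    then show ?thesis using False by (auto simp: first_currents_def)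
  qed
qed

theorem mainTheorem8:
  fixes m :: nat
  assumes "1 \<le> m"
  shows
    \<comment> \<open>each generated H^(j) has the form z^j + sum_{l>=1} H^j_l z^{-l}\<close>
    "(\<forall>h \<in> data_space m. \<forall>x. (\<lambda>k. gen m h k x) \<in> Hspace)
   \<and> \<comment> \<open>the H^j_l are differential polynomials in the coefficients of H^(1..m)\<close>
     (\<forall>j l. \<exists>p. dp_vars p \<subseteq> {(a, l'). 1 \<le> a \<and> a \<le> m \<and> 1 \<le> l'} \<and>
        (\<forall>h \<in> data_space m. \<forall>x. hc (gen m h j x) l = dp_eval p h x))
   \<and> \<comment> \<open>the first m currents are the given ones\<close>
     (\<forall>h \<in> data_space m. \<forall>a x. 1 \<le> a \<and> a \<le> m \<longrightarrow> gen m h a x = cur a (\<lambda>l. h a l x))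
   \<and> \<comment> \<open>x \<mapsto> (H^(k)(x))_k is an integral curve of X_m\<close>
     (\<forall>h \<in> data_space m. integral_curve m (\<lambda>x k. gen m h k x))
   \<and> \<comment> \<open>converse: every integral curve arises from its first m currents\<close>
     (\<forall>\<gamma>. integral_curve m \<gamma> \<longrightarrow>
        first_currents m \<gamma> \<in> data_space m \<and>
        (\<forall>x k. \<gamma> x k = gen m (first_currents m \<gamma>) k x))
   \<and> \<comment> \<open>hence integral curves of X_m correspond bijectively to m-tuples of currents\<close>
     bij_betw (first_currents m) {\<gamma>. integral_curve m \<gamma>} (data_space m)"
proof (intro conjI)
  have m: "1 \<le> m" by (rule assms)
  show "\<forall>h \<in> data_space m. \<forall>x. (\<lambda>k. gen m h k x) \<in> Hspace"
    using gen_is_current[OF m] by (simp add: Hspace_iff_is_current)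
  show "\<forall>j l. \<exists>p. dp_vars p \<subseteq> {(a, l'). 1 \<le> a \<and> a \<le> m \<and> 1 \<le> l'} \<and>
      (\<forall>h \<in> data_space m. \<forall>x. hc (gen m h j x) l = dp_eval p h x)"
    using is_diff_poly_gen_nth[OF m] unfolding is_diff_poly_def data_vars_def hc_def by blast
  show "\<forall>h \<in> data_space m. \<forall>a x. 1 \<le> a \<and> a \<le> m \<longrightarrow> gen m h a x = cur a (\<lambda>l. h a l x)"
    by (simp add: gen_cur)
  show "\<forall>h \<in> data_space m. integral_curve m (\<lambda>x k. gen m h k x)"
    using integral_curve_gen[OF m] by blast
  show "\<forall>\<gamma>. integral_curve m \<gamma> \<longrightarrow> first_currents m \<gamma> \<in> data_space m \<and>
      (\<forall>x k. \<gamma> x k = gen m (first_currents m \<gamma>) k x)"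
    using first_currents_in_data_space integral_curve_eq_gen[OF m] by blast
  show "bij_betw (first_currents m) {\<gamma>. integral_curve m \<gamma>} (data_space m)"
  proof (rule bij_betw_byWitness[where f' = "\<lambda>h x k. gen m h k x"])
    show "\<forall>\<gamma> \<in> {\<gamma>. integral_curve m \<gamma>}. (\<lambda>x k. gen m (first_currents m \<gamma>) k x) = \<gamma>"
      using integral_curve_eq_gen[OF m] by auto
  qed (use first_currents_gen first_currents_in_data_space integral_curve_gen[OF m] in auto)
qed

end
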